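(* Fix a program in the first-order functional language described in the context. Then for every expression $\pi{:}e$ of the program and every slicing criterion $\sigma$, $$\mathcal S(L(M_\pi^\sigma))\neq\emptyset \iff \mathrm{inSlice}(e,\sigma),$$ where $\mathrm{inSlice}(e,\sigma)$ holds iff $L(A^{\mathrm{comp}}_\pi)\cap\sigma\neq\emptyset$. Here $M_\pi^\sigma$ is the Mohri–Nederhof approximation of the demand grammar $G_\pi^\sigma$ and $A^{\mathrm{comp}}_\pi$ is the completing automaton of $\pi$.
   Context: Programs. A program consists of first-order function definitions $(\mathtt{define}\ (f\ z_1\ \dots\ z_n)\ e_f)$ and a main expression $e_{\mathrm{main}}$, which is treated as the body of a parameterless function $\mathrm{main}$. Programs are in administrative normal form and all variable names are distinct. The grammar is $e ::= (\mathtt{if}\ x\ e_1\ e_2) \mid (\mathtt{let}\ x \leftarrow s\ \mathtt{in}\ e) \mid (\mathtt{return}\ x)$, $s ::= k \mid \mathtt{nil} \mid (\mathtt{cons}\ x_1\ x_2) \mid (\mathtt{car}\ x) \mid (\mathtt{cdr}\ x) \mid (\mathtt{null?}\ x) \mid (+\ x_1\ x_2) \mid (f\ x_1 \dots x_n)$. Every expression, every application and every variable occurrence carries a distinct label $\pi$. Demands. Let $\Sigma=\{0,1,\bar0,\bar1,2\}$. A demand is a set of strings over $\Sigma$. For sets we write $\sigma_1\sigma_2=\{\alpha\beta\}$ and $a\sigma=\{a\alpha\mid\alpha\in\sigma\}$. A slicing criterion is a prefix-closed set of strings over $\{0,1\}$ (given by a regular grammar). Demand analysis. Maps from program points to demands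 are combined by pointwise union. For applications, $\mathcal A(s,\sigma)$ is: - for a constant or $\mathtt{nil}$: $\{\pi\mapsto\sigma\}$; - for $(\mathtt{null?}\ \pi_1{:}x)$: $\{\pi_1\mapsto2\sigma,\pi\mapsto\sigma\}$; - for $(+\ \pi_1{:}x\ \pi_2{:}y)$: $\{\pi_1\mapsto2\sigma,\pi_2\mapsto2\sigma,\pi\mapsto\sigma\}$; - for $(\mathtt{car}\ \pi_1{:}x)$: $\{\pi_1\mapsto2\sigma\cup0\sigma,\pi\mapsto\sigma\}$; - for $(\mathtt{cdr}\ \pi_1{:}x)$: $\{\pi_1\mapsto2\sigma\cup1\sigma,\pi\mapsto\sigma\}$; - for $(\mathtt{cons}\ \pi_1{:}x\ \pi_2{:}y)$: $\{\pi_1\mapsto\bar0\sigma,\pi_2\mapsto\bar1\sigma,\pi\mapsto\sigma\}$; - for $(f\ \pi_1{:}y_1\dots\pi_n{:}y_n)$: $\{\pi_i\mapsto L_f^i\sigma,\pi\mapsto\sigma\}$. For expressions, $\mathcal D$ is: - $\mathcal D(\pi{:}(\mathtt{return}\ \pi_1{:}x),\sigma)=\{\pi_1\mapsto\sigma,\pi\mapsto\sigma\}$; - $\mathcal D(\pi{:}(\mathtt{if}\ \pi_1{:}x\ e_1\ e_2),\sigma)=\mathcal D(e_1,\sigma)\cup\mathcal D(e_2,\sigma)\cup\{\pi_1\mapsto2\sigma,\pi\mapsto\sigma\}$; - $\mathcal D(\pi{:}(\mathtt{let}\ x\leftarrow s\ \mathtt{in}\ e),\sigma)=\mathcal A(s,\bigcup_{\pi'}DE(\pi'))\cup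 DE\cup\{\pi\mapsto\sigma\}$, where $DE=\mathcal D(e,\sigma)$ and $\pi'$ ranges over the occurrences of $x$ in $e$. Summaries and concrete demands. $L_f^i\subseteq\Sigma^*$ satisfies $L_f^i\sigma=\bigcup_{\pi'}\mathcal D(e_f,\sigma)(\pi')$ over occurrences $\pi'$ of the $i$-th parameter in $e_f$, for symbolic $\sigma$. The concrete demands are $\sigma_{\mathrm{main}}=$ the slicing criterion, and $\sigma_f=$ the union of the demands on all call sites of $f$. The demand at $\pi$ in the body of $f$ is $D_\pi=\mathcal D(e_f,\sigma_f)(\pi)$. These equations form a context-free grammar over $\Sigma$ (least solution); $G_\pi^\sigma$ is this grammar with start symbol $D_\pi$. Mohri–Nederhof approximation. Consider each strongly connected component $N'$ of mutually recursive nonterminals whose productions are neither all right-linear nor all left-linear with respect to $N'$. For such a component, add a fresh $A'$ for each $A\in N'$. Replace each production $A\to\alpha_0B_1\alpha_1\cdots B_m\alpha_m$ ($A,B_j\in N'$, the $\alpha_j$ free of $N'$-nonterminals, $m\ge0$) by $A\to\alpha_0B_1,\ B_1'\to\alpha_1B_2,\dots,B_m'\to\alpha_mA'$ (for $m=0$: $A\to\alpha_0A'$), and add $A'\to\epsilon$ for each $A\in N'$. $M_\pi^\sigma$ is the resulting regular grammar/automaton from $G_\pi^\sigma$, with language $L(M_\pi^\sigma)$. Simplification $\mathcal S$ (string-wise from the right, extended to sets by union): - $\mathcal S(\epsilon)=\{\epsilon\}$; - $\mathcal S(0w)=0\mathcal S(w)$ and $\mathcal S(1w)=1\mathcal S(w)$;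 - $\mathcal S(\bar0w)=\{\alpha\mid0\alpha\in\mathcal S(w)\}$ and $\mathcal S(\bar1w)=\{\alpha\mid1\alpha\in\mathcal S(w)\}$; - $\mathcal S(2w)=\emptyset$ if $\mathcal S(w)=\emptyset$, and $\{\epsilon\}$ otherwise. Canonicalization $\mathcal C$ (string-wise from the right, extended by union): - $\mathcal C(\epsilon)=\{\epsilon\}$; - $\mathcal C(0w)=0\mathcal C(w)$, $\mathcal C(1w)=1\mathcal C(w)$, $\mathcal C(2w)=2\mathcal C(w)$; - $\mathcal C(\bar0w)=\{\bar0\mid\mathcal C(w)=\{\epsilon\}\}\cup\{\alpha\mid0\alpha\in\mathcal C(w)\}\cup\{\bar0\bar1\alpha\mid\bar1\alpha\in\mathcal C(w)\}\cup\{\bar0\bar0\alpha\mid\bar0\alpha\in\mathcal C(w)\}$; - $\mathcal C(\bar1w)=\{\bar1\mid\mathcal C(w)=\{\epsilon\}\}\cup\{\alpha\mid1\alpha\in\mathcal C(w)\}\cup\{\bar1\bar1\alpha\mid\bar1\alpha\in\mathcal C(w)\}\cup\{\bar1\bar0\alpha\mid\bar0\alpha\in\mathcal C(w)\}$. $A_\pi$ is an automaton accepting $\mathcal C(L(M_\pi^{\{\epsilon\}}))$. For $p\in\{\bar0,\bar1\}^*$, $\overline{p}$ is the reverse of $p$ with $\bar0\mapsto0$ and $\bar1\mapsto1$. The completing automaton $A^{\mathrm{comp}}_\pi$ is constructed from $A_\pi$ as follows: - take as final states those reachable from the start state by transitions labelled $0,1,2$ only; - reverse every $\bar0$-transition into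 a $0$-transition and every $\bar1$-transition into a $1$-transition, dropping all other transitions; - add a new start state with $\epsilon$-transitions to the old final states. Its language is $L(A^{\mathrm{comp}}_\pi)=\{\overline{p}\mid p\in\{\bar0,\bar1\}^*,\ \exists u\in\{0,1,2\}^*:\ up\in L(A_\pi)\}$. *)

theory Defs
  imports Main
begin

section \<open>Programs (first-order, ANF, labelled)\<close>

type_synonym lab = nat
type_synonym var = nat
type_synonym fname = nat

datatype occ = Occ lab var

datatype app =
    AConst lab int
  | ANil lab
  | ACons lab occ occ
  | ACar lab occ
  | ACdr lab occ
  | ANull lab occ
  | APlus lab occ occ
  | ACall lab fname "occ list"

datatype expr =
    EIf lab occ expr expr
  | ELet lab var app expr
  | EReturn lab occ

text \<open>A function definition (define (f z_1 ... z_n) e_f)\<close>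
type_synonym fdef = "fname \<times> var list \<times> expr"
text \<open>A program: function definitions and the main expression\<close>
type_synonym prog = "fdef list \<times> expr"

fun occ_lab :: "occ \<Rightarrow> lab" where "occ_lab (Occ l x) = l"
fun occ_var :: "occ \<Rightarrow> var" where "occ_var (Occ l x) = x"

fun app_occs :: "app \<Rightarrow> occ list" where
  "app_occs (AConst l k) = []"
| "app_occs (ANil l) = []"
| "app_occs (ACons l a b) = [a, b]"
| "app_occs (ACar l a) = [a]"
| "app_occs (ACdr l a) = [a]"
| "app_occs (ANull l a) = [a]"
| "app_occs (APlus l a b) = [a, b]"
| "app_occs (ACall l f as) = as"

fun app_lab :: "app \<Rightarrow> lab" where
  "app_lab (AConst l k) = l"
| "app_lab (ANil l) = l"
| "app_lab (ACons l a b) = l"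
| "app_lab (ACar l a) = l"
| "app_lab (ACdr l a) = l"
| "app_lab (ANull l a) = l"
| "app_lab (APlus l a b) = l"
| "app_lab (ACall l f as) = l"

fun expr_lab :: "expr \<Rightarrow> lab" where
  "expr_lab (EIf l x e1 e2) = l"
| "expr_lab (ELet l x s e) = l"
| "expr_lab (EReturn l x) = l"

fun expr_occs :: "expr \<Rightarrow> occ list" where
  "expr_occs (EIf l x e1 e2) = x # expr_occs e1 @ expr_occs e2"
| "expr_occs (ELet l x s e) = app_occs s @ expr_occs e"
| "expr_occs (EReturn l x) = [x]"

definition occ_labs :: "var \<Rightarrow> expr \<Rightarrow> lab set" where
  "occ_labs x e = {occ_lab oc | oc. oc \<in> set (expr_occs e) \<and> occ_var oc = x}"

fun all_labs :: "expr \<Rightarrow> lab list" where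
  "all_labs (EIf l x e1 e2) = l # occ_lab x # all_labs e1 @ all_labs e2"
| "all_labs (ELet l x s e) = l # app_lab s # map occ_lab (app_occs s) @ all_labs e"
| "all_labs (EReturn l x) = [l, occ_lab x]"

fun expr_labs :: "expr \<Rightarrow> lab list" where
  "expr_labs (EIf l x e1 e2) = l # expr_labs e1 @ expr_labs e2"
| "expr_labs (ELet l x s e) = l # expr_labs e"
| "expr_labs (EReturn l x) = [l]"

fun binders :: "expr \<Rightarrow> var list" where
  "binders (EIf l x e1 e2) = binders e1 @ binders e2"
| "binders (ELet l x s e) = x # binders e"
| "binders (EReturn l x) = []"

text \<open>Call sites: (label of the application, called function, number of arguments)\<close>
fun calls :: "expr \<Rightarrow> (lab \<times> fname \<times> nat) list" where
  "calls (EIf l x e1 e2) = calls e1 @ calls e2"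
| "calls (ELet l x s e) =
     (case s of ACall l' f as \<Rightarrow> [(l', f, length as)] | _ \<Rightarrow> []) @ calls e"
| "calls (EReturn l x) = []"

fun scoped :: "var set \<Rightarrow> expr \<Rightarrow> bool" where
  "scoped V (EIf l x e1 e2) = (occ_var x \<in> V \<and> scoped V e1 \<and> scoped V e2)"
| "scoped V (ELet l x s e) = ((\<forall>oc\<in>set (app_occs s). occ_var oc \<in> V) \<and> scoped (insert x V) e)"
| "scoped V (EReturn l x) = (occ_var x \<in> V)"

definition bodies :: "prog \<Rightarrow> expr list" where
  "bodies P = map (\<lambda>(f, zs, e). e) (fst P) @ [snd P]"

definition wf_prog :: "prog \<Rightarrow> bool" where
  "wf_prog P \<longleftrightarrow>
     distinct (concat (map all_labs (bodies P))) \<and>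
     distinct (concat (map (\<lambda>(f, zs, e). zs @ binders e) (fst P)) @ binders (snd P)) \<and>
     distinct (map fst (fst P)) \<and>
     (\<forall>e \<in> set (bodies P). \<forall>(l, g, n) \<in> set (calls e).
        \<exists>zs e'. (g, zs, e') \<in> set (fst P) \<and> length zs = n) \<and>
     (\<forall>(f, zs, e) \<in> set (fst P). scoped (set zs) e) \<and>
     scoped {} (snd P)"

definition prog_expr_labs :: "prog \<Rightarrow> lab set" where
  "prog_expr_labs P = (\<Union>e \<in> set (bodies P). set (expr_labs e))"

definition callsites :: "prog \<Rightarrow> fname \<Rightarrow> lab set" where
  "callsites P f = {l. \<exists>e \<in> set (bodies P). \<exists>n. (l, f, n) \<in> set (calls e)}"

text \<open>A grammar is a (possibly infinite) set of productions A -> rhs; rhs is a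
  list of terminals (Inl) and nonterminals (Inr).\<close>
type_synonym ('t, 'n) grammar = "('n \<times> ('t + 'n) list) set"

definition step :: "('t, 'n) grammar \<Rightarrow> (('t + 'n) list \<times> ('t + 'n) list) set" where
  "step G = {(u @ [Inr A] @ v, u @ rhs @ v) | u A v rhs. (A, rhs) \<in> G}"

definition lang :: "('t, 'n) grammar \<Rightarrow> 'n \<Rightarrow> 't list set" where
  "lang G S = {w. ([Inr S], map Inl w) \<in> (step G)\<^sup>*}"

datatype sym = S0 | S1 | S0b | S1b | S2

text \<open>Nonterminals of the demand grammar: D_pi, L_f^i (0-based i), sigma_f, and
  sigma_main (the slicing criterion)\<close>
datatype nt = Dn lab | Ln fname nat | Sig fname | Crit

type_synonym form = "(sym + nt) list"

definition munion :: "(lab \<Rightarrow> form set) \<Rightarrow> (lab \<Rightarrow> form set) \<Rightarrow> lab \<Rightarrow> form set" (infixl "\<uplus>" 65) where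
  "munion D1 D2 = (\<lambda>p. D1 p \<union> D2 p)"

definition single :: "lab \<Rightarrow> form set \<Rightarrow> lab \<Rightarrow> form set" where
  "single l S = (\<lambda>_. {})(l := S)"

definition pre :: "sym \<Rightarrow> form set \<Rightarrow> form set" where
  "pre a S = (\<lambda>\<alpha>. Inl a # \<alpha>) ` S"

definition preN :: "nt \<Rightarrow> form set \<Rightarrow> form set" where
  "preN N S = (\<lambda>\<alpha>. Inr N # \<alpha>) ` S"

text \<open>The function A(s, sigma), computed symbolically (demands as sets of
  sentential forms, so that L_f^i can occur as a nonterminal).\<close>
fun Adem :: "app \<Rightarrow> form set \<Rightarrow> lab \<Rightarrow> form set" where
  "Adem (AConst l k) \<sigma> = single l \<sigma>"
| "Adem (ANil l) \<sigma> = single l \<sigma>"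
| "Adem (ANull l x) \<sigma> = single (occ_lab x) (pre S2 \<sigma>) \<uplus> single l \<sigma>"
| "Adem (APlus l x y) \<sigma> =
     single (occ_lab x) (pre S2 \<sigma>) \<uplus> single (occ_lab y) (pre S2 \<sigma>) \<uplus> single l \<sigma>"
| "Adem (ACar l x) \<sigma> = single (occ_lab x) (pre S2 \<sigma> \<union> pre S0 \<sigma>) \<uplus> single l \<sigma>"
| "Adem (ACdr l x) \<sigma> = single (occ_lab x) (pre S2 \<sigma> \<union> pre S1 \<sigma>) \<uplus> single l \<sigma>"
| "Adem (ACons l x y) \<sigma> =
     single (occ_lab x) (pre S0b \<sigma>) \<uplus> single (occ_lab y) (pre S1b \<sigma>) \<uplus> single l \<sigma>"
| "Adem (ACall l f ys) \<sigma> =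
     (\<lambda>p. \<Union>{preN (Ln f i) \<sigma> | i. i < length ys \<and> occ_lab (ys ! i) = p}) \<uplus> single l \<sigma>"

fun Ddem :: "expr \<Rightarrow> form set \<Rightarrow> lab \<Rightarrow> form set" where
  "Ddem (EReturn l x) \<sigma> = single (occ_lab x) \<sigma> \<uplus> single l \<sigma>"
| "Ddem (EIf l x e1 e2) \<sigma> =
     Ddem e1 \<sigma> \<uplus> Ddem e2 \<sigma> \<uplus> single (occ_lab x) (pre S2 \<sigma>) \<uplus> single l \<sigma>"
| "Ddem (ELet l x s e) \<sigma> =
     (let DE = Ddem e \<sigma> in Adem s (\<Union>p \<in> occ_labs x e. DE p) \<uplus> DE \<uplus> single l \<sigma>)"

text \<open>Since every rule only prefixes sigma, D(e_f, sigma_f)(pi) = D(e_f, {eps})(pi) sigma_f;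
  sigma_f and sigma_main are nonterminals, and L_f^i is the symbolic summary.\<close>
definition demand_grammar :: "prog \<Rightarrow> sym list set \<Rightarrow> (sym, nt) grammar" where
  "demand_grammar P \<sigma> =
     {(Crit, map Inl w) | w. w \<in> \<sigma>}
   \<union> {(Dn p, \<alpha> @ [Inr (Sig f)]) | f zs e p \<alpha>.
        (f, zs, e) \<in> set (fst P) \<and> \<alpha> \<in> Ddem e {[]} p}
   \<union> {(Dn p, \<alpha> @ [Inr Crit]) | p \<alpha>. \<alpha> \<in> Ddem (snd P) {[]} p}
   \<union> {(Sig f, [Inr (Dn p)]) | f p. p \<in> callsites P f}
   \<union> {(Ln f i, \<alpha>) | f zs e i \<alpha>.
        (f, zs, e) \<in> set (fst P) \<and> i < length zs \<and>
        \<alpha> \<in> (\<Union>p \<in> occ_labs (zs ! i) e. Ddem e {[]} p)}"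

section \<open>Mohri-Nederhof approximation\<close>

datatype 'n mnnt = Orig 'n | Prime 'n

definition nt_edge :: "('t, 'n) grammar \<Rightarrow> ('n \<times> 'n) set" where
  "nt_edge G = {(A, B). \<exists>rhs. (A, rhs) \<in> G \<and> Inr B \<in> set rhs}"

definition scc :: "('t, 'n) grammar \<Rightarrow> 'n \<Rightarrow> 'n set" where
  "scc G A = {B. (A, B) \<in> (nt_edge G)\<^sup>* \<and> (B, A) \<in> (nt_edge G)\<^sup>*}"

definition right_linear_wrt :: "'n set \<Rightarrow> ('t + 'n) list \<Rightarrow> bool" where
  "right_linear_wrt N rhs \<longleftrightarrow>
     (\<forall>i < length rhs. (\<exists>B \<in> N. rhs ! i = Inr B) \<longrightarrow> i = length rhs - 1)"

definition left_linear_wrt :: "'n set \<Rightarrow> ('t + 'n) list \<Rightarrow> bool" where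
  "left_linear_wrt N rhs \<longleftrightarrow>
     (\<forall>i < length rhs. (\<exists>B \<in> N. rhs ! i = Inr B) \<longrightarrow> i = 0)"

definition needs_mn :: "('t, 'n) grammar \<Rightarrow> 'n set \<Rightarrow> bool" where
  "needs_mn G N \<longleftrightarrow>
     \<not> (\<forall>(A, rhs) \<in> G. A \<in> N \<longrightarrow> right_linear_wrt N rhs) \<and>
     \<not> (\<forall>(A, rhs) \<in> G. A \<in> N \<longrightarrow> left_linear_wrt N rhs)"

text \<open>Splitting A -> a0 B1 a1 ... Bm am into A -> a0 B1, B1' -> a1 B2, ..., Bm' -> am A'
  (and A -> a0 A' if m = 0). Arguments: N-membership, current left-hand side,
  the original left-hand side A, remaining rhs, accumulated segment.\<close>
fun mn_chain :: "('n \<Rightarrow> bool) \<Rightarrow> 'n mnnt \<Rightarrow> 'n \<Rightarrow> ('t + 'n) list \<Rightarrow> ('t + 'n mnnt) list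
                 \<Rightarrow> ('n mnnt \<times> ('t + 'n mnnt) list) list" where
  "mn_chain inN cur A [] acc = [(cur, acc @ [Inr (Prime A)])]"
| "mn_chain inN cur A (Inl t # r) acc = mn_chain inN cur A r (acc @ [Inl t])"
| "mn_chain inN cur A (Inr B # r) acc =
     (if inN B then (cur, acc @ [Inr (Orig B)]) # mn_chain inN (Prime B) A r []
      else mn_chain inN cur A r (acc @ [Inr (Orig B)]))"

definition mohri_nederhof :: "('t, 'n) grammar \<Rightarrow> ('t, 'n mnnt) grammar" where
  "mohri_nederhof G =
     {p | A rhs p. (A, rhs) \<in> G \<and> needs_mn G (scc G A) \<and>
        p \<in> set (mn_chain (\<lambda>B. B \<in> scc G A) (Orig A) A rhs [])}
   \<union> {(Orig A, map (map_sum id Orig) rhs) | A rhs. (A, rhs) \<in> G \<and> \<not> needs_mn G (scc G A)}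
   \<union> {(Prime A, []) | A. needs_mn G (scc G A)}"

definition LM :: "prog \<Rightarrow> sym list set \<Rightarrow> lab \<Rightarrow> sym list set" where
  "LM P \<sigma> p = lang (mohri_nederhof (demand_grammar P \<sigma>)) (Orig (Dn p))"

fun simp1 :: "sym list \<Rightarrow> sym list set" where
  "simp1 [] = {[]}"
| "simp1 (S0 # w) = (Cons S0) ` simp1 w"
| "simp1 (S1 # w) = (Cons S1) ` simp1 w"
| "simp1 (S0b # w) = {\<alpha>. S0 # \<alpha> \<in> simp1 w}"
| "simp1 (S1b # w) = {\<alpha>. S1 # \<alpha> \<in> simp1 w}"
| "simp1 (S2 # w) = (if simp1 w = {} then {} else {[]})"

definition simpS :: "sym list set \<Rightarrow> sym list set" where
  "simpS L = (\<Union>w \<in> L. simp1 w)"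

fun canon1 :: "sym list \<Rightarrow> sym list set" where
  "canon1 [] = {[]}"
| "canon1 (S0 # w) = (Cons S0) ` canon1 w"
| "canon1 (S1 # w) = (Cons S1) ` canon1 w"
| "canon1 (S2 # w) = (Cons S2) ` canon1 w"
| "canon1 (S0b # w) =
     (if canon1 w = {[]} then {[S0b]} else {}) \<union> {\<alpha>. S0 # \<alpha> \<in> canon1 w}
     \<union> {S0b # S1b # \<alpha> | \<alpha>. S1b # \<alpha> \<in> canon1 w}
     \<union> {S0b # S0b # \<alpha> | \<alpha>. S0b # \<alpha> \<in> canon1 w}"
| "canon1 (S1b # w) =
     (if canon1 w = {[]} then {[S1b]} else {}) \<union> {\<alpha>. S1 # \<alpha> \<in> canon1 w}
     \<union> {S1b # S1b # \<alpha> | \<alpha>. S1b # \<alpha> \<in> canon1 w}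
     \<union> {S1b # S0b # \<alpha> | \<alpha>. S0b # \<alpha> \<in> canon1 w}"

definition canonS :: "sym list set \<Rightarrow> sym list set" where
  "canonS L = (\<Union>w \<in> L. canon1 w)"

definition LA :: "prog \<Rightarrow> lab \<Rightarrow> sym list set" where
  "LA P p = canonS (LM P {[]} p)"

fun unbar :: "sym \<Rightarrow> sym" where
  "unbar S0b = S0"
| "unbar S1b = S1"
| "unbar a = a"

definition ovl :: "sym list \<Rightarrow> sym list" where
  "ovl p = rev (map unbar p)"

definition Lcomp :: "prog \<Rightarrow> lab \<Rightarrow> sym list set" where
  "Lcomp P p = {ovl q | q u. set q \<subseteq> {S0b, S1b} \<and> set u \<subseteq> {S0, S1, S2} \<and> u @ q \<in> LA P p}"

definition inSlice :: "prog \<Rightarrow> lab \<Rightarrow> sym list set \<Rightarrow> bool" where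
  "inSlice P p \<sigma> \<longleftrightarrow> Lcomp P p \<inter> \<sigma> \<noteq> {}"

definition regular_lang :: "sym list set \<Rightarrow> bool" where
  "regular_lang L \<longleftrightarrow>
     (\<exists>(G :: (sym, nat) grammar) S. finite G \<and>
        (\<forall>(A, rhs) \<in> G. \<exists>u. rhs = map Inl u \<or> (\<exists>B. rhs = map Inl u @ [Inr B])) \<and>
        L = lang G S)"

definition slicing_criterion :: "sym list set \<Rightarrow> bool" where
  "slicing_criterion \<sigma> \<longleftrightarrow>
     (\<forall>w \<in> \<sigma>. set w \<subseteq> {S0, S1}) \<and>
     (\<forall>w v. w @ v \<in> \<sigma> \<longrightarrow> w \<in> \<sigma>) \<and>
     regular_lang \<sigma>"

end

theory Submission
  imports Defs "HOL-Library.Sublist"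
begin

text \<open>
  In the demand grammar every production of a demand nonterminal (\<open>D\<^sub>\<pi>\<close>, \<open>\<sigma>\<^sub>f\<close> or the
  criterion) ends in exactly one demand nonterminal and otherwise mentions only summaries
  \<open>L\<^sub>f\<^sup>i\<close>, whose productions never mention demand nonterminals. So the components of demand
  nonterminals are left untouched by the Mohri-Nederhof transformation, and a derivation from
  \<open>D\<^sub>\<pi>\<close> keeps a single demand nonterminal at its right end until the criterion is replaced
  by a word of \<open>\<sigma>\<close>; hence \<open>L(M\<^sub>\<pi>\<^sup>\<sigma>) = L(M\<^sub>\<pi>\<^sup>{\<epsilon>}) \<cdot> \<sigma>\<close>.

  Canonicalization preserves simplification, and a canonical word has the shape \<open>u p\<close> with
  \<open>u\<close> over \<open>{0,1,2}\<close> and \<open>p\<close> barred. For \<open>s\<close> over \<open>{0,1}\<close>, \<open>u p s\<close> simplifies to a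
  nonempty set iff \<open>p\<close> with its bars removed and reversed is a prefix of \<open>s\<close>. Since \<open>\<sigma>\<close> is
  prefix-closed, some \<open>y s\<close> with \<open>s \<in> \<sigma>\<close> survives simplification iff that prefix lies in \<open>\<sigma>\<close>,
  i.e. iff the language of the completing automaton meets \<open>\<sigma>\<close>.
\<close>

section \<open>Simplification of canonical words\<close>

lemma simp1_unbarred: "set s \<subseteq> {S0, S1} \<Longrightarrow> simp1 s = {s}"
proof (induction s)
  case (Cons a s) then show ?case by (cases a) auto
qed simp

lemma set_ovl_subset: "set q \<subseteq> {S0b, S1b} \<Longrightarrow> set (ovl q) \<subseteq> {S0, S1}"
  by (induction q) (auto simp: ovl_def)

lemma simp1_barred_append:
  assumes "set q \<subseteq> {S0b, S1b}" and "set s \<subseteq> {S0, S1}"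
  shows "simp1 (q @ s) = {s'. s = ovl q @ s'}"
  using assms
proof (induction q)
  case Nil then show ?case by (simp add: simp1_unbarred ovl_def)
next
  case (Cons a q)
  then have "a = S0b \<or> a = S1b" "simp1 (q @ s) = {s'. s = ovl q @ s'}" by auto
  then show ?case by (elim disjE) (simp_all add: ovl_def)
qed

lemma simp1_unbarred_append_empty_iff:
  "set u \<subseteq> {S0, S1, S2} \<Longrightarrow> simp1 (u @ w) = {} \<longleftrightarrow> simp1 w = {}"
proof (induction u)
  case (Cons a u) then show ?case by (cases a) auto
qed simp

lemma canon1_at_most_one: "c \<in> canon1 y \<Longrightarrow> c' \<in> canon1 y \<Longrightarrow> c = c'"
proof (induction y arbitrary: c c')
  case (Cons a y)
  then consider "canon1 y = {}" | d where "canon1 y = {d}" by blast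
  then show ?case
  proof cases
    case 1
    then show ?thesis using Cons.prems by (cases a) auto
  next
    case (2 d)
    then show ?thesis using Cons.prems
      by (cases a; cases d rule: list.exhaust[case_product sym.exhaust]) (auto split: if_splits)
  qed
qed simp

lemma canon1_barred_suffix:
  "c \<in> canon1 y \<Longrightarrow> set (dropWhile (\<lambda>a. a \<in> {S0, S1, S2}) c) \<subseteq> {S0b, S1b}"
proof (induction y arbitrary: c)
  case (Cons a y) then show ?case by (cases a) (fastforce split: if_splits)+
qed simp

lemma canon1_split:
  assumes "c \<in> canon1 y"
  obtains u q where "c = u @ q" "set u \<subseteq> {S0, S1, S2}" "set q \<subseteq> {S0b, S1b}"
proof
  let ?P = "\<lambda>a. a \<in> {S0, S1, S2}"
  show "c = takeWhile ?P c @ dropWhile ?P c" by simp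
  show "set (takeWhile ?P c) \<subseteq> {S0, S1, S2}" by (auto dest: set_takeWhileD)
  show "set (dropWhile ?P c) \<subseteq> {S0b, S1b}" using canon1_barred_suffix[OF assms] .
qed

lemma simp1_append_canon1: "simp1 (y @ s) = (\<Union>c \<in> canon1 y. simp1 (c @ s))"
proof (induction y)
  case (Cons a y)
  consider "canon1 y = {}" | c where "canon1 y = {c}" using canon1_at_most_one by blast
  then show ?case
  proof cases
    case 1
    then show ?thesis using Cons.IH by (cases a) auto
  next
    case (2 c)
    then have IH: "simp1 (y @ s) = simp1 (c @ s)" using Cons.IH by simp
    show ?thesis
    proof (cases c)
      case Nil
      then show ?thesis using 2 IH by (cases a) auto
    next
      case (Cons b c')
      then show ?thesis using 2 IH by (cases a; cases b) auto
    qed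
  qed
qed simp

lemma simp1_append_nonempty_iff:
  assumes "u @ q \<in> canon1 y" "set u \<subseteq> {S0, S1, S2}" "set q \<subseteq> {S0b, S1b}" "set s \<subseteq> {S0, S1}"
  shows "simp1 (y @ s) \<noteq> {} \<longleftrightarrow> prefix (ovl q) s"
proof -
  have "canon1 y = {u @ q}" using assms(1) canon1_at_most_one by blast
  then have "simp1 (y @ s) = simp1 (u @ (q @ s))" using simp1_append_canon1[of y s] by simp
  then have "simp1 (y @ s) \<noteq> {} \<longleftrightarrow> simp1 (q @ s) \<noteq> {}"
    using simp1_unbarred_append_empty_iff[OF assms(2)] by simp
  also have "\<dots> \<longleftrightarrow> (\<exists>s'. s = ovl q @ s')"
    unfolding simp1_barred_append[OF assms(3,4)] by blast
  finally show ?thesis unfolding prefix_def .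
qed

section \<open>Grammars that are right-linear along a spine\<close>

lemma step_intro: "(A, rhs) \<in> G \<Longrightarrow> (u @ Inr A # v, u @ rhs @ v) \<in> step G"
  unfolding step_def by force

lemma step_mono: "G \<subseteq> H \<Longrightarrow> step G \<subseteq> step H"
  unfolding step_def by blast

lemma Cons_append_eq_append_map_Inl:
  assumes "u @ Inr A # v = \<gamma> @ map Inl s"
  obtains v' where "\<gamma> = u @ Inr A # v'" "v = v' @ map Inl s"
proof -
  obtain us where "u = \<gamma> @ us \<and> us @ Inr A # v = map Inl s \<or> u @ us = \<gamma> \<and> Inr A # v = us @ map Inl s"
    using assms unfolding append_eq_append_conv2 by blast
  then show ?thesis
  proof
    assume "u = \<gamma> @ us \<and> us @ Inr A # v = map Inl s"
    then have "Inr A \<in> set (map Inl s)" by (metis in_set_conv_decomp)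
    then show ?thesis by auto
  next
    assume "u @ us = \<gamma> \<and> Inr A # v = us @ map Inl s"
    then show ?thesis using that by (cases us; cases s) auto
  qed
qed

lemma Cons_append_eq_append_singleton:
  "u @ a # v = \<gamma> @ [b] \<Longrightarrow> v = [] \<and> u = \<gamma> \<and> a = b \<or> (\<exists>v'. v = v' @ [b] \<and> \<gamma> = u @ a # v')"
  by (cases v rule: rev_cases) auto

definition remove_lhs :: "'n \<Rightarrow> ('t, 'n) grammar \<Rightarrow> ('t, 'n) grammar" where
  "remove_lhs C G = {(A, r) \<in> G. A \<noteq> C}"

locale right_linear_spine =
  fixes G :: "('t, 'n) grammar" and T :: "'n set" and C :: 'n
  assumes spine_prod:
      "\<lbrakk>(X, r) \<in> G; X \<in> T; X \<noteq> C\<rbrakk> \<Longrightarrow> \<exists>\<gamma> Y. r = \<gamma> @ [Inr Y] \<and> Y \<in> T \<and> set \<gamma> \<inter> Inr ` T = {}"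
    and off_spine_prod: "\<lbrakk>(X, r) \<in> G; X \<notin> T\<rbrakk> \<Longrightarrow> set r \<inter> Inr ` T = {}"
    and final_prod: "(C, r) \<in> G \<Longrightarrow> \<exists>s. r = map Inl s"
    and final_in_spine: "C \<in> T"
begin

lemma rewrite_off_spine:
  assumes "(A, rhs) \<in> G" "Inr A \<in> set \<gamma>" "set \<gamma> \<inter> Inr ` T = {}"
  shows "(A, rhs) \<in> remove_lhs C G" "set rhs \<inter> Inr ` T = {}"
proof -
  have "A \<notin> T" using assms(2,3) by blast
  then show "(A, rhs) \<in> remove_lhs C G" "set rhs \<inter> Inr ` T = {}"
    using assms(1) off_spine_prod final_in_spine unfolding remove_lhs_def by auto
qed

definition spine_form :: "'n \<Rightarrow> ('t + 'n) list \<Rightarrow> bool" where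
  "spine_form S \<phi> \<longleftrightarrow> (\<exists>\<gamma> Y. \<phi> = \<gamma> @ [Inr Y] \<and> Y \<in> T \<and> set \<gamma> \<inter> Inr ` T = {}
     \<and> ([Inr S], \<phi>) \<in> (step (remove_lhs C G))\<^sup>*)"

definition final_form :: "'n \<Rightarrow> ('t + 'n) list \<Rightarrow> bool" where
  "final_form S \<phi> \<longleftrightarrow> (\<exists>\<gamma> s. \<phi> = \<gamma> @ map Inl s \<and> (C, map Inl s) \<in> G \<and> set \<gamma> \<inter> Inr ` T = {}
     \<and> ([Inr S], \<gamma> @ [Inr C]) \<in> (step (remove_lhs C G))\<^sup>*)"

lemma spine_form_step:
  assumes "spine_form S \<phi>" and "(\<phi>, \<phi>') \<in> step G"
  shows "spine_form S \<phi>' \<or> final_form S \<phi>'"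
proof -
  obtain \<gamma> Y where \<phi>: "\<phi> = \<gamma> @ [Inr Y]" "Y \<in> T" "set \<gamma> \<inter> Inr ` T = {}"
    "([Inr S], \<phi>) \<in> (step (remove_lhs C G))\<^sup>*"
    using assms(1) unfolding spine_form_def by blast
  obtain u A v rhs where rw: "\<phi> = u @ Inr A # v" "\<phi>' = u @ rhs @ v" "(A, rhs) \<in> G"
    using assms(2) unfolding step_def by auto
  from Cons_append_eq_append_singleton[of u "Inr A" v \<gamma> "Inr Y"] rw(1) \<phi>(1)
  consider (last) "v = []" "u = \<gamma>" "A = Y" | (inner) v' where "v = v' @ [Inr Y]" "\<gamma> = u @ Inr A # v'"
    by auto
  then show ?thesis
  proof cases
    case last
    show ?thesis
    proof (cases "Y = C")
      case True
      then obtain s where "rhs = map Inl s" using final_prod rw(3) last by blast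
      then show ?thesis using rw last \<phi> True unfolding final_form_def by auto
    next
      case False
      then obtain \<gamma>' Y' where r: "rhs = \<gamma>' @ [Inr Y']" "Y' \<in> T" "set \<gamma>' \<inter> Inr ` T = {}"
        using spine_prod rw(3) last \<phi>(2) by blast
      have "(A, rhs) \<in> remove_lhs C G" using rw(3) last False unfolding remove_lhs_def by simp
      then have "(\<phi>, \<phi>') \<in> step (remove_lhs C G)" using rw(1,2) step_intro by metis
      then show ?thesis using \<phi> r rw(2) last unfolding spine_form_def
        by (intro disjI1 exI[of _ "\<gamma> @ \<gamma>'"] exI[of _ Y']) auto
    qed
  next
    case (inner v')
    have off: "(A, rhs) \<in> remove_lhs C G" "set rhs \<inter> Inr ` T = {}"
      using rewrite_off_spine[OF rw(3) _ \<phi>(3)] inner by auto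
    then have "(\<phi>, \<phi>') \<in> step (remove_lhs C G)" using rw(1,2) step_intro by metis
    then show ?thesis using \<phi> rw(2) inner off(2) unfolding spine_form_def
      by (intro disjI1 exI[of _ "u @ rhs @ v'"] exI[of _ Y]) auto
  qed
qed

lemma final_form_step:
  assumes "final_form S \<phi>" and "(\<phi>, \<phi>') \<in> step G"
  shows "final_form S \<phi>'"
proof -
  obtain \<gamma> s where \<phi>: "\<phi> = \<gamma> @ map Inl s" "(C, map Inl s) \<in> G" "set \<gamma> \<inter> Inr ` T = {}"
    "([Inr S], \<gamma> @ [Inr C]) \<in> (step (remove_lhs C G))\<^sup>*"
    using assms(1) unfolding final_form_def by blast
  obtain u A v rhs where rw: "\<phi> = u @ Inr A # v" "\<phi>' = u @ rhs @ v" "(A, rhs) \<in> G"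
    using assms(2) unfolding step_def by auto
  obtain v' where v': "\<gamma> = u @ Inr A # v'" "v = v' @ map Inl s"
    using Cons_append_eq_append_map_Inl rw(1) \<phi>(1) by metis
  have off: "(A, rhs) \<in> remove_lhs C G" "set rhs \<inter> Inr ` T = {}"
    using rewrite_off_spine[OF rw(3) _ \<phi>(3)] v'(1) by auto
  then have "(\<gamma> @ [Inr C], (u @ rhs @ v') @ [Inr C]) \<in> step (remove_lhs C G)"
    using v'(1) step_intro[of A rhs "remove_lhs C G" u "v' @ [Inr C]"] by simp
  then show ?thesis using \<phi> rw(2) v' off(2) unfolding final_form_def
    by (intro exI[of _ "u @ rhs @ v'"] exI[of _ s]) auto
qed

lemma derivation_shape:
  assumes "S \<in> T" and "([Inr S], \<phi>) \<in> (step G)\<^sup>*"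
  shows "spine_form S \<phi> \<or> final_form S \<phi>"
  using assms(2)
proof (induction rule: rtrancl_induct)
  case base
  show ?case using assms(1) unfolding spine_form_def by (intro disjI1 exI[of _ "[]"]) auto
next
  case (step \<phi> \<phi>')
  then show ?case using spine_form_step final_form_step by blast
qed

lemma lang_split_at_final:
  assumes "S \<in> T"
  shows "lang G S = {y @ s | y s. ([Inr S], map Inl y @ [Inr C]) \<in> (step (remove_lhs C G))\<^sup>* \<and> (C, map Inl s) \<in> G}"
proof (intro set_eqI iffI)
  fix w
  assume "w \<in> lang G S"
  then have "([Inr S], map Inl w) \<in> (step G)\<^sup>*" unfolding lang_def by simp
  moreover have "\<not> spine_form S (map Inl w)"
    unfolding spine_form_def by (auto simp: map_eq_append_conv)
  ultimately obtain \<gamma> s where d: "map Inl w = \<gamma> @ map Inl s" "(C, map Inl s) \<in> G"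
    "([Inr S], \<gamma> @ [Inr C]) \<in> (step (remove_lhs C G))\<^sup>*"
    using derivation_shape[OF assms] unfolding final_form_def by blast
  then obtain y where "\<gamma> = map Inl y" "w = y @ s"
    by (auto simp: map_eq_append_conv)
  then show "w \<in> {y @ s | y s. ([Inr S], map Inl y @ [Inr C]) \<in> (step (remove_lhs C G))\<^sup>* \<and> (C, map Inl s) \<in> G}"
    using d by auto
next
  fix w
  assume "w \<in> {y @ s | y s. ([Inr S], map Inl y @ [Inr C]) \<in> (step (remove_lhs C G))\<^sup>* \<and> (C, map Inl s) \<in> G}"
  then obtain y s where w: "w = y @ s" "([Inr S], map Inl y @ [Inr C]) \<in> (step (remove_lhs C G))\<^sup>*"
    "(C, map Inl s) \<in> G" by blast
  have "(step (remove_lhs C G))\<^sup>* \<subseteq> (step G)\<^sup>*"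
    by (rule rtrancl_mono, rule step_mono) (auto simp: remove_lhs_def)
  moreover have "(map Inl y @ [Inr C], map Inl (y @ s)) \<in> step G"
    using step_intro[OF w(3), of "map Inl y" "[]"] by simp
  ultimately have "([Inr S], map Inl (y @ s)) \<in> (step G)\<^sup>*" using w(2) by auto
  then show "w \<in> lang G S" unfolding lang_def w(1) by simp
qed

end

section \<open>Mohri-Nederhof transformation and terminal nonterminals\<close>

definition terminal_nt :: "('t, 'n) grammar \<Rightarrow> 'n \<Rightarrow> bool" where
  "terminal_nt G C \<longleftrightarrow> (\<forall>r. (C, r) \<in> G \<longrightarrow> (\<exists>w. r = map Inl w))"

lemma right_linear_wrt_map_Inl: "right_linear_wrt N (map Inl w)"
  unfolding right_linear_wrt_def by auto

lemma left_linear_wrt_map_Inl: "left_linear_wrt N (map Inl w)"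
  unfolding left_linear_wrt_def by auto

lemma nt_edge_remove_lhs_terminal:
  "terminal_nt G C \<Longrightarrow> nt_edge (remove_lhs C G) = nt_edge G"
  unfolding nt_edge_def remove_lhs_def terminal_nt_def by fastforce

lemma scc_remove_lhs_terminal: "terminal_nt G C \<Longrightarrow> scc (remove_lhs C G) = scc G"
  unfolding scc_def by (simp add: nt_edge_remove_lhs_terminal)

lemma needs_mn_remove_lhs_terminal:
  "terminal_nt G C \<Longrightarrow> needs_mn (remove_lhs C G) N = needs_mn G N"
  unfolding needs_mn_def remove_lhs_def terminal_nt_def
  by (fastforce simp: right_linear_wrt_map_Inl left_linear_wrt_map_Inl)

lemma terminal_nt_not_needs_mn:
  assumes "terminal_nt G C"
  shows "\<not> needs_mn G (scc G C)"
proof -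
  have "(C, B) \<notin> nt_edge G" for B
    using assms unfolding terminal_nt_def nt_edge_def by auto
  then have "scc G C = {C}"
    unfolding scc_def by (auto elim: converse_rtranclE)
  then show ?thesis
    using assms unfolding needs_mn_def terminal_nt_def by (auto simp: right_linear_wrt_map_Inl)
qed

lemma mn_chain_lhs:
  "(X, r) \<in> set (mn_chain inN cur A rhs acc) \<Longrightarrow> X = cur \<or> (\<exists>B. X = Prime B)"
  by (induction inN cur A rhs acc rule: mn_chain.induct) (auto split: if_splits)

lemma mn_chain_Orig_rhs:
  "(X, r) \<in> set (mn_chain inN cur A rhs acc) \<Longrightarrow> Inr (Orig B) \<in> set r \<Longrightarrow>
     Inr (Orig B) \<in> set acc \<or> Inr B \<in> set rhs"
  by (induction inN cur A rhs acc rule: mn_chain.induct) (auto split: if_splits)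

lemma mohri_nederhof_Orig:
  assumes "(Orig A, r) \<in> mohri_nederhof G" "\<not> needs_mn G (scc G A)"
  shows "\<exists>rhs. (A, rhs) \<in> G \<and> r = map (map_sum id Orig) rhs"
  using assms mn_chain_lhs unfolding mohri_nederhof_def by fastforce

lemma mohri_nederhof_terminal_Orig:
  assumes "terminal_nt G C"
  shows "(Orig C, r) \<in> mohri_nederhof G \<longleftrightarrow> (\<exists>w. r = map Inl w \<and> (C, map Inl w) \<in> G)"
proof
  assume "(Orig C, r) \<in> mohri_nederhof G"
  then obtain rhs where rhs: "(C, rhs) \<in> G" "r = map (map_sum id Orig) rhs"
    using mohri_nederhof_Orig terminal_nt_not_needs_mn[OF assms] by meson
  moreover obtain w where "rhs = map Inl w"
    using assms rhs(1) unfolding terminal_nt_def by blast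
  ultimately show "\<exists>w. r = map Inl w \<and> (C, map Inl w) \<in> G"
    by (auto simp: comp_def)
next
  assume "\<exists>w. r = map Inl w \<and> (C, map Inl w) \<in> G"
  then obtain w where w: "r = map (map_sum id Orig) (map Inl w)" "(C, map Inl w) \<in> G"
    by (auto simp: comp_def)
  then have "(Orig C, r) \<in> {(Orig A, map (map_sum id Orig) rhs) | A rhs.
      (A, rhs) \<in> G \<and> \<not> needs_mn G (scc G A)}"
    using terminal_nt_not_needs_mn[OF assms] by blast
  then show "(Orig C, r) \<in> mohri_nederhof G"
    unfolding mohri_nederhof_def by (rule UnI1[OF UnI2])
qed

lemma mohri_nederhof_remove_lhs_terminal:
  assumes "terminal_nt G C"
  shows "mohri_nederhof G = mohri_nederhof (remove_lhs C G)
    \<union> {(Orig C, map (map_sum id Orig) rhs) | rhs. (C, rhs) \<in> G}"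
proof -
  have scc: "scc (remove_lhs C G) = scc G"
    and needs: "\<And>N. needs_mn (remove_lhs C G) N = needs_mn G N"
    using scc_remove_lhs_terminal[OF assms] needs_mn_remove_lhs_terminal[OF assms] by auto
  have C: "\<not> needs_mn G (scc G C)" using terminal_nt_not_needs_mn[OF assms] .
  have chains: "{p | A rhs p. (A, rhs) \<in> G \<and> needs_mn G (scc G A) \<and>
          p \<in> set (mn_chain (\<lambda>B. B \<in> scc G A) (Orig A) A rhs [])}
      = {p | A rhs p. (A, rhs) \<in> remove_lhs C G \<and> needs_mn G (scc G A) \<and>
          p \<in> set (mn_chain (\<lambda>B. B \<in> scc G A) (Orig A) A rhs [])}"
    using C unfolding remove_lhs_def by blast
  have copies: "{(Orig A, map (map_sum id Orig) rhs) | A rhs. (A, rhs) \<in> G \<and> \<not> needs_mn G (scc G A)}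
      = {(Orig A, map (map_sum id Orig) rhs) | A rhs. (A, rhs) \<in> remove_lhs C G \<and> \<not> needs_mn G (scc G A)}
        \<union> {(Orig C, map (map_sum id Orig) rhs) | rhs. (C, rhs) \<in> G}"
    using C unfolding remove_lhs_def by blast
  show ?thesis
    unfolding mohri_nederhof_def scc needs chains copies by (simp only: Un_ac)
qed

lemma remove_lhs_mohri_nederhof_terminal:
  assumes "terminal_nt G C"
  shows "remove_lhs (Orig C) (mohri_nederhof G)
    = remove_lhs (Orig C) (mohri_nederhof (remove_lhs C G))"
  by (subst mohri_nederhof_remove_lhs_terminal[OF assms]) (auto simp: remove_lhs_def)

section \<open>The demand grammar\<close>

fun summary_nt :: "nt \<Rightarrow> bool" where
  "summary_nt (Ln f i) = True"
| "summary_nt _ = False"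

definition summary_form :: "form \<Rightarrow> bool" where
  "summary_form \<alpha> \<longleftrightarrow> (\<forall>B. Inr B \<in> set \<alpha> \<longrightarrow> summary_nt B)"

lemma summary_form_simps [simp]:
  "summary_form []"
  "summary_form (\<alpha> @ \<beta>) \<longleftrightarrow> summary_form \<alpha> \<and> summary_form \<beta>"
  by (auto simp: summary_form_def)

lemma Adem_summary_form:
  "\<forall>\<alpha>\<in>S. summary_form \<alpha> \<Longrightarrow> \<alpha> \<in> Adem s S p \<Longrightarrow> summary_form \<alpha>"
  by (cases s) (auto simp: munion_def single_def pre_def preN_def summary_form_def split: if_splits)

lemma Ddem_summary_form:
  "\<forall>\<alpha>\<in>S. summary_form \<alpha> \<Longrightarrow> \<alpha> \<in> Ddem e S p \<Longrightarrow> summary_form \<alpha>"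
proof (induction e arbitrary: p \<alpha>)
  case (ELet l x s e)
  then have "\<forall>\<alpha>\<in>(\<Union>p \<in> occ_labs x e. Ddem e S p). summary_form \<alpha>" by blast
  then show ?case using ELet Adem_summary_form[of "\<Union>p \<in> occ_labs x e. Ddem e S p" \<alpha> s p]
    by (auto simp: munion_def single_def Let_def split: if_splits)
qed (auto simp: munion_def single_def pre_def summary_form_def split: if_splits)

lemma Ddem_Nil_summary_form: "\<alpha> \<in> Ddem e {[]} p \<Longrightarrow> summary_form \<alpha>"
  using Ddem_summary_form[of "{[]}"] by (auto simp: summary_form_def)

lemma demand_grammar_Crit: "(Crit, rhs) \<in> demand_grammar P \<sigma> \<longleftrightarrow> (\<exists>w\<in>\<sigma>. rhs = map Inl w)"
  unfolding demand_grammar_def by auto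

lemma terminal_nt_demand_grammar: "terminal_nt (demand_grammar P \<sigma>) Crit"
  unfolding terminal_nt_def demand_grammar_Crit by blast

lemma remove_lhs_Crit_demand_grammar:
  "remove_lhs Crit (demand_grammar P \<sigma>) = remove_lhs Crit (demand_grammar P \<sigma>')"
  unfolding remove_lhs_def demand_grammar_def by auto

lemma demand_grammar_summary_rhs:
  "(A, rhs) \<in> demand_grammar P \<sigma> \<Longrightarrow> summary_nt A \<Longrightarrow> summary_form rhs"
  unfolding demand_grammar_def by (auto dest: Ddem_Nil_summary_form)

lemma demand_grammar_demand_rhs:
  assumes "(A, rhs) \<in> demand_grammar P \<sigma>" "\<not> summary_nt A" "A \<noteq> Crit"
  shows "\<exists>\<beta> X. rhs = \<beta> @ [Inr X] \<and> \<not> summary_nt X \<and> summary_form \<beta>"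
  using assms unfolding demand_grammar_def by (auto dest: Ddem_Nil_summary_form)

lemma summary_nt_reachable:
  "(B, A) \<in> (nt_edge (demand_grammar P \<sigma>))\<^sup>* \<Longrightarrow> summary_nt B \<Longrightarrow> summary_nt A"
proof (induction rule: rtrancl_induct)
  case (step A A')
  then show ?case
    using demand_grammar_summary_rhs unfolding nt_edge_def summary_form_def by blast
qed

lemma demand_nt_not_needs_mn:
  assumes "\<not> summary_nt A"
  shows "\<not> needs_mn (demand_grammar P \<sigma>) (scc (demand_grammar P \<sigma>) A)"
proof -
  let ?G = "demand_grammar P \<sigma>" and ?N = "scc (demand_grammar P \<sigma>) A"
  have N: "\<not> summary_nt B" if "B \<in> ?N" for B
    using that assms summary_nt_reachable unfolding scc_def by blast
  have "right_linear_wrt ?N rhs" if B: "(B, rhs) \<in> ?G" "B \<in> ?N" for B rhs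
  proof (cases "B = Crit")
    case True
    then show ?thesis using B demand_grammar_Crit right_linear_wrt_map_Inl by metis
  next
    case False
    then obtain \<beta> X where "rhs = \<beta> @ [Inr X]" "summary_form \<beta>"
      using demand_grammar_demand_rhs[OF B(1) N[OF B(2)] False] by blast
    then show ?thesis
      using N unfolding right_linear_wrt_def summary_form_def
      by (auto simp: nth_append split: if_splits) (metis nth_mem)
  qed
  then show ?thesis unfolding needs_mn_def by blast
qed

definition demand_spine :: "nt mnnt set" where
  "demand_spine = Orig ` {A. \<not> summary_nt A}"

lemma summary_form_spine_free:
  "summary_form \<beta> \<Longrightarrow> set (map (map_sum id Orig) \<beta>) \<inter> Inr ` demand_spine = {}"
  by (auto simp: summary_form_def demand_spine_def map_sum_def split: sum.splits)

lemma mohri_nederhof_demand_grammar_spine: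
  assumes "(X, r) \<in> mohri_nederhof (demand_grammar P \<sigma>)" "X \<in> demand_spine" "X \<noteq> Orig Crit"
  shows "\<exists>\<gamma> Y. r = \<gamma> @ [Inr Y] \<and> Y \<in> demand_spine \<and> set \<gamma> \<inter> Inr ` demand_spine = {}"
proof -
  obtain A where A: "X = Orig A" "\<not> summary_nt A" "A \<noteq> Crit"
    using assms(2,3) unfolding demand_spine_def by blast
  then obtain rhs where rhs: "(A, rhs) \<in> demand_grammar P \<sigma>" "r = map (map_sum id Orig) rhs"
    using mohri_nederhof_Orig[of A r] assms(1) demand_nt_not_needs_mn by blast
  then obtain \<beta> Y where "rhs = \<beta> @ [Inr Y]" "\<not> summary_nt Y" "summary_form \<beta>"
    using demand_grammar_demand_rhs A(2,3) by blast
  then show ?thesis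
    using rhs(2) summary_form_spine_free
    by (intro exI[of _ "map (map_sum id Orig) \<beta>"] exI[of _ "Orig Y"]) (auto simp: demand_spine_def)
qed

lemma mohri_nederhof_demand_grammar_off_spine:
  assumes "(X, r) \<in> mohri_nederhof (demand_grammar P \<sigma>)" and off: "X \<notin> demand_spine"
  shows "set r \<inter> Inr ` demand_spine = {}"
  using assms(1) unfolding mohri_nederhof_def
proof (elim UnE CollectE exE conjE)
  let ?G = "demand_grammar P \<sigma>"
  fix A rhs x
  assume prod: "(X, r) = x" "(A, rhs) \<in> ?G" "needs_mn ?G (scc ?G A)"
    "x \<in> set (mn_chain (\<lambda>B. B \<in> scc ?G A) (Orig A) A rhs [])"
  have chain: "(X, r) \<in> set (mn_chain (\<lambda>B. B \<in> scc ?G A) (Orig A) A rhs [])"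
    using prod(1,4) by simp
  have "summary_nt A" using demand_nt_not_needs_mn prod(3) by blast
  then have "summary_form rhs" using demand_grammar_summary_rhs prod(2) by blast
  moreover have "Inr (Orig B) \<in> set r \<Longrightarrow> Inr B \<in> set rhs" for B
    using mn_chain_Orig_rhs[OF chain] by simp
  ultimately show ?thesis
    unfolding summary_form_def demand_spine_def by auto
next
  fix A rhs
  assume copy: "(X, r) = (Orig A, map (map_sum id Orig) rhs)" "(A, rhs) \<in> demand_grammar P \<sigma>"
  then have "summary_nt A" using off by (auto simp: demand_spine_def)
  then have "summary_form rhs" using demand_grammar_summary_rhs copy(2) by blast
  then show ?thesis using copy(1) summary_form_spine_free by simp
qed simp

lemma right_linear_spine_demand_grammar:
  "right_linear_spine (mohri_nederhof (demand_grammar P \<sigma>)) demand_spine (Orig Crit)"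
proof
  fix X r
  assume "(X, r) \<in> mohri_nederhof (demand_grammar P \<sigma>)" "X \<in> demand_spine" "X \<noteq> Orig Crit"
  then show "\<exists>\<gamma> Y. r = \<gamma> @ [Inr Y] \<and> Y \<in> demand_spine \<and> set \<gamma> \<inter> Inr ` demand_spine = {}"
    by (rule mohri_nederhof_demand_grammar_spine)
next
  fix X r
  assume "(X, r) \<in> mohri_nederhof (demand_grammar P \<sigma>)" "X \<notin> demand_spine"
  then show "set r \<inter> Inr ` demand_spine = {}"
    by (rule mohri_nederhof_demand_grammar_off_spine)
next
  fix r
  assume "(Orig Crit, r) \<in> mohri_nederhof (demand_grammar P \<sigma>)"
  then show "\<exists>s. r = map Inl s"
    by (auto simp: mohri_nederhof_terminal_Orig[OF terminal_nt_demand_grammar])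
qed (simp add: demand_spine_def)

lemma remove_lhs_Crit_mohri_nederhof_demand_grammar:
  "remove_lhs (Orig Crit) (mohri_nederhof (demand_grammar P \<sigma>))
    = remove_lhs (Orig Crit) (mohri_nederhof (demand_grammar P \<sigma>'))"
  using remove_lhs_mohri_nederhof_terminal[OF terminal_nt_demand_grammar]
    remove_lhs_Crit_demand_grammar by metis

lemma mohri_nederhof_demand_grammar_Crit:
  "(Orig Crit, map Inl s) \<in> mohri_nederhof (demand_grammar P \<sigma>) \<longleftrightarrow> s \<in> \<sigma>"
  by (auto simp: mohri_nederhof_terminal_Orig[OF terminal_nt_demand_grammar] demand_grammar_Crit)

lemma LM_eq_concat: "LM P \<sigma> p = {y @ s | y s. y \<in> LM P {[]} p \<and> s \<in> \<sigma>}"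
proof -
  let ?R = "\<lambda>y. ([Inr (Orig (Dn p))], map Inl y @ [Inr (Orig Crit)])
    \<in> (step (remove_lhs (Orig Crit) (mohri_nederhof (demand_grammar P {[]}))))\<^sup>*"
  have spine: "Orig (Dn p) \<in> demand_spine" by (simp add: demand_spine_def)
  have split: "LM P \<sigma>' p = {y @ s | y s. ?R y \<and> s \<in> \<sigma>'}" for \<sigma>'
    unfolding LM_def
      right_linear_spine.lang_split_at_final[OF right_linear_spine_demand_grammar spine]
      remove_lhs_Crit_mohri_nederhof_demand_grammar[of P \<sigma>' "{[]}"]
      mohri_nederhof_demand_grammar_Crit ..
  have "LM P {[]} p = {y. ?R y}"
    unfolding split by auto
  then show ?thesis
    unfolding split[of \<sigma>] by blast
qed

lemma ex_criterion_simp1_nonempty_iff: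
  assumes "\<forall>s\<in>\<sigma>. set s \<subseteq> {S0, S1}" and "\<forall>w v. w @ v \<in> \<sigma> \<longrightarrow> w \<in> \<sigma>"
  shows "(\<exists>s\<in>\<sigma>. simp1 (y @ s) \<noteq> {}) \<longleftrightarrow>
    (\<exists>u q. u @ q \<in> canon1 y \<and> set u \<subseteq> {S0, S1, S2} \<and> set q \<subseteq> {S0b, S1b} \<and> ovl q \<in> \<sigma>)"
proof
  assume "\<exists>s\<in>\<sigma>. simp1 (y @ s) \<noteq> {}"
  then obtain s where s: "s \<in> \<sigma>" "simp1 (y @ s) \<noteq> {}" by blast
  then obtain c where "c \<in> canon1 y"
    using simp1_append_canon1[of y s] by auto
  then obtain u q where c: "u @ q \<in> canon1 y" "set u \<subseteq> {S0, S1, S2}" "set q \<subseteq> {S0b, S1b}"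
    using canon1_split by metis
  have "prefix (ovl q) s"
    using s(2) simp1_append_nonempty_iff[OF c assms(1)[rule_format, OF s(1)]] by simp
  then have "ovl q \<in> \<sigma>" using s(1) assms(2) unfolding prefix_def by blast
  then show "\<exists>u q. u @ q \<in> canon1 y \<and> set u \<subseteq> {S0, S1, S2} \<and> set q \<subseteq> {S0b, S1b} \<and> ovl q \<in> \<sigma>"
    using c by blast
next
  assume "\<exists>u q. u @ q \<in> canon1 y \<and> set u \<subseteq> {S0, S1, S2} \<and> set q \<subseteq> {S0b, S1b} \<and> ovl q \<in> \<sigma>"
  then obtain u q where c: "u @ q \<in> canon1 y" "set u \<subseteq> {S0, S1, S2}" "set q \<subseteq> {S0b, S1b}"
    and "ovl q \<in> \<sigma>"
    by blast
  moreover have "simp1 (y @ ovl q) \<noteq> {}"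
    using simp1_append_nonempty_iff[OF c set_ovl_subset[OF c(3)]] by simp
  ultimately show "\<exists>s\<in>\<sigma>. simp1 (y @ s) \<noteq> {}" by blast
qed

theorem mainTheorem4:
  fixes P :: prog and p :: lab and \<sigma> :: "sym list set"
  assumes "wf_prog P"
    and "p \<in> prog_expr_labs P"
    and "slicing_criterion \<sigma>"
  shows "simpS (LM P \<sigma> p) \<noteq> {} \<longleftrightarrow> inSlice P p \<sigma>"
proof -
  have crit: "\<forall>s\<in>\<sigma>. set s \<subseteq> {S0, S1}" "\<forall>w v. w @ v \<in> \<sigma> \<longrightarrow> w \<in> \<sigma>"
    using assms(3) unfolding slicing_criterion_def by auto
  have "simpS (LM P \<sigma> p) \<noteq> {} \<longleftrightarrow> (\<exists>y \<in> LM P {[]} p. \<exists>s\<in>\<sigma>. simp1 (y @ s) \<noteq> {})"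
    unfolding simpS_def LM_eq_concat[of P \<sigma>] by blast
  also have "\<dots> \<longleftrightarrow> (\<exists>y \<in> LM P {[]} p. \<exists>u q. u @ q \<in> canon1 y \<and> set u \<subseteq> {S0, S1, S2}
      \<and> set q \<subseteq> {S0b, S1b} \<and> ovl q \<in> \<sigma>)"
    using ex_criterion_simp1_nonempty_iff[OF crit] by simp
  also have "\<dots> \<longleftrightarrow> inSlice P p \<sigma>"
    unfolding inSlice_def Lcomp_def LA_def canonS_def by blast
  finally show ?thesis .
qed

end
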